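(* Let $k$ be an algebraically closed field, $0\ne p\in k$, and $A(p)=k\langle z_1,z_2\rangle/(r_3,r_4)$ with $\deg z_i=1$, $r_3=z_1z_2^2-p^2z_2^2z_1$, $r_4=z_1^3z_2+pz_1^2z_2z_1+p^2z_1z_2z_1^2+p^3z_2z_1^3$. Then $H_{A(p)}(t)=\frac{1}{(1-t)^2(1-t^2)(1-t^3)}$.
   Context: The Hilbert series of a graded vector space $M=\bigoplus M_i$ is $H_M(t)=\sum_i(\dim_kM_i)t^i$. *)

theory Defs
  imports "HOL-Computational_Algebra.Computational_Algebra" "HOL-Library.Function_Algebras"
begin

text \<open>Free algebra k<z1,z2>: elements are finitely supported functions on words over the
  alphabet {z1,z2}; the letter z1 is encoded as False, z2 as True. A word has degree = length.\<close>

definition ncscale :: "'k::field \<Rightarrow> (bool list \<Rightarrow> 'k) \<Rightarrow> (bool list \<Rightarrow> 'k)" where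
  "ncscale c f = (\<lambda>w. c * f w)"

definition ncpoly :: "(bool list \<Rightarrow> 'k::field) set" where
  "ncpoly = {f. finite {w. f w \<noteq> 0}}"

definition ncmult :: "(bool list \<Rightarrow> 'k::field) \<Rightarrow> (bool list \<Rightarrow> 'k) \<Rightarrow> (bool list \<Rightarrow> 'k)" where
  "ncmult f g = (\<lambda>w. \<Sum>i\<le>length w. f (take i w) * g (drop i w))"

definition mon :: "bool list \<Rightarrow> (bool list \<Rightarrow> 'k::field)" where
  "mon u = (\<lambda>w. if w = u then 1 else 0)"

definition nc_ideal :: "(bool list \<Rightarrow> 'k::field) set \<Rightarrow> (bool list \<Rightarrow> 'k) set" where
  "nc_ideal R = module.span ncscale {ncmult a (ncmult r b) | a r b. a \<in> ncpoly \<and> r \<in> R \<and> b \<in> ncpoly}"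

definition nc_hom :: "nat \<Rightarrow> (bool list \<Rightarrow> 'k::field) set" where
  "nc_hom n = {f. \<forall>w. length w \<noteq> n \<longrightarrow> f w = 0}"

text \<open>dim_k of the degree-n component of k<z1,z2>/I, i.e. dim (F_n) - dim (I \<inter> F_n)
  (I homogeneous).\<close>
definition quot_dim :: "(bool list \<Rightarrow> 'k::field) set \<Rightarrow> nat \<Rightarrow> nat" where
  "quot_dim I n = vector_space.dim ncscale (nc_hom n :: (bool list \<Rightarrow> 'k) set)
                   - vector_space.dim ncscale (I \<inter> nc_hom n)"

definition hilbert_series :: "(bool list \<Rightarrow> 'k::field) set \<Rightarrow> rat fps" where
  "hilbert_series I = Abs_fps (\<lambda>n. of_nat (quot_dim I n))"

definition r3 :: "'k::field \<Rightarrow> (bool list \<Rightarrow> 'k)" where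
  "r3 p = (\<lambda>w. mon [False, True, True] w - p^2 * mon [True, True, False] w)"

definition r4 :: "'k::field \<Rightarrow> (bool list \<Rightarrow> 'k)" where
  "r4 p = (\<lambda>w. mon [False, False, False, True] w + p * mon [False, False, True, False] w
              + p^2 * mon [False, True, False, False] w + p^3 * mon [True, False, False, False] w)"

end

theory Submission
  imports Defs
begin

(* Orient the relations along the degree-lexicographic order with z1 > z2:
   z1 z2^2 -> p^2 z2^2 z1 and z1^3 z2 -> -(p z1^2 z2 z1 + p^2 z1 z2 z1^2 + p^3 z2 z1^3).
   Their one ambiguity z1^3 z2^2 produces, after division by p, the rule
   z1^2 z2 z1 z2 -> -p z1 z2 z1^2 z2 + p^3 z2 z1^2 z2 z1 + p^4 z2 z1 z2 z1^2, and then all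
   ambiguities resolve. By the diamond lemma the normal form of a word is well defined; it is
   congruent to the word modulo the ideal and the normal-form map kills the ideal, so the
   irreducible words form a basis of A(p). They are exactly z2^a (z1 z2)^i (z1^2 z2)^j z1^c,
   whence H(t) is the generating function of a + 2i + 3j + c. *)

abbreviation (input) z1 :: bool where "z1 \<equiv> False"
abbreviation (input) z2 :: bool where "z2 \<equiv> True"

interpretation free: vector_space "ncscale :: 'k::field \<Rightarrow> (bool list \<Rightarrow> 'k) \<Rightarrow> _"
  by unfold_locales (auto simp: ncscale_def fun_eq_iff algebra_simps)

lemma sum_fun_apply: "(\<Sum>x\<in>A. f x) v = (\<Sum>x\<in>A. f x v)"
  by (induction A rule: infinite_finite_induct) auto

lemma sum_list_fun_apply: "sum_list (map f xs) v = sum_list (map (\<lambda>x. f x v) xs)"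
  by (induction xs) auto

lemma sum_list_map_swap:
  "(\<Sum>x \<leftarrow> xs. \<Sum>y \<leftarrow> ys. f x y) = (\<Sum>y \<leftarrow> ys. \<Sum>x \<leftarrow> xs. f x y)"
  for f :: "'a \<Rightarrow> 'b \<Rightarrow> 'c::comm_monoid_add"
  by (induction xs) (simp_all add: sum_list_addf)

lemma sum_list_map_neutral: "(\<And>x. x \<in> set xs \<Longrightarrow> f x = 0) \<Longrightarrow> sum_list (map f xs) = 0"
  by (induction xs) auto

lemma sum_sum_list_swap:
  "(\<Sum>x\<in>X. \<Sum>y \<leftarrow> ys. f x y) = (\<Sum>y \<leftarrow> ys. \<Sum>x\<in>X. f x y)"
  for f :: "'a \<Rightarrow> 'b \<Rightarrow> 'c::comm_monoid_add"
  by (induction ys) (simp_all add: sum.distrib)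

lemma finite_words_length: "finite {w :: bool list. length w = n}"
  using finite_lists_length_eq[of "UNIV :: bool set" n] by simp

lemma card_words_length: "card {w :: bool list. length w = n} = 2 ^ n"
  using card_lists_length_eq[of "UNIV :: bool set" n] by simp

lemma ncmult_mon_mon: "ncmult (mon u) (mon v) = (mon (u @ v) :: bool list \<Rightarrow> 'k::field)"
proof
  fix w :: "bool list"
  have "mon u (take i w) * mon v (drop i w) = (if i = length u \<and> w = u @ v then 1 else (0::'k))"
    if "i \<le> length w" for i
    using that by (auto simp: mon_def append_eq_conv_conj)
  then show "ncmult (mon u) (mon v) w = (mon (u @ v) w :: 'k)"
    by (simp add: ncmult_def mon_def)
qed

lemma ncmult_add_left: "ncmult (f + g) h = ncmult f h + ncmult g h"
  by (auto simp: ncmult_def fun_eq_iff sum.distrib algebra_simps)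

lemma ncmult_add_right: "ncmult h (f + g) = ncmult h f + ncmult h g"
  by (auto simp: ncmult_def fun_eq_iff sum.distrib algebra_simps)

lemma ncmult_diff_left: "ncmult (f - g) h = ncmult f h - ncmult g h"
  by (auto simp: ncmult_def fun_eq_iff sum_subtractf algebra_simps)

lemma ncmult_diff_right: "ncmult h (f - g) = ncmult h f - ncmult h g"
  by (auto simp: ncmult_def fun_eq_iff sum_subtractf algebra_simps)

lemma ncmult_uminus_left: "ncmult (- f) h = - ncmult f h"
  by (auto simp: ncmult_def fun_eq_iff sum_negf)

lemma ncmult_uminus_right: "ncmult h (- f) = - ncmult h f"
  by (auto simp: ncmult_def fun_eq_iff sum_negf)

lemma ncmult_scale_left: "ncmult (ncscale c f) h = ncscale c (ncmult f h)"
  by (auto simp: ncmult_def ncscale_def fun_eq_iff sum_distrib_left algebra_simps)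

lemma ncmult_scale_right: "ncmult h (ncscale c f) = ncscale c (ncmult h f)"
  by (auto simp: ncmult_def ncscale_def fun_eq_iff sum_distrib_left algebra_simps)

lemmas ncmult_linear =
  ncmult_add_left ncmult_add_right ncmult_diff_left ncmult_diff_right
  ncmult_uminus_left ncmult_uminus_right
  ncmult_scale_left ncmult_scale_right

lemma mon_in_ncpoly: "mon u \<in> ncpoly"
  by (simp add: ncpoly_def mon_def)

lemma sandwich_in_nc_ideal:
  "r \<in> R \<Longrightarrow> ncmult (mon u) (ncmult r (mon v)) \<in> nc_ideal R"
  unfolding nc_ideal_def by (rule free.span_base) (use mon_in_ncpoly in blast)

lemma subspace_nc_ideal: "free.subspace (nc_ideal R)"
  unfolding nc_ideal_def by (rule free.subspace_span)

lemma nc_ideal_sum_list: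
  "(\<And>x. x \<in> set xs \<Longrightarrow> f x \<in> nc_ideal R) \<Longrightarrow> sum_list (map f xs) \<in> nc_ideal R"
  by (induction xs) (auto intro: free.subspace_add free.subspace_0 subspace_nc_ideal)

lemma sum_words_mon: "(\<Sum>x | length x = j. mon u x * H x) = (if length u = j then H u else 0)"
proof -
  have "(\<Sum>x | length x = j. mon u x * H x) = (\<Sum>x | length x = j. if u = x then H x else 0)"
    by (rule sum.cong) (auto simp: mon_def)
  then show ?thesis by (simp add: finite_words_length)
qed

lemma sum_words_ncmult:
  "(\<Sum>w | length w = n. ncmult f g w * H w) =
   (\<Sum>i\<le>n. \<Sum>u | length u = i. \<Sum>s | length s = n - i. f u * g s * H (u @ s))"
proof -
  have "(\<Sum>w | length w = n. ncmult f g w * H w) =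
        (\<Sum>w | length w = n. \<Sum>i\<le>n. f (take i w) * g (drop i w) * H w)"
    by (auto simp: ncmult_def sum_distrib_right intro!: sum.cong)
  also have "\<dots> = (\<Sum>i\<le>n. \<Sum>w | length w = n. f (take i w) * g (drop i w) * H w)"
    by (rule sum.swap)
  also have "\<dots> = (\<Sum>i\<le>n. \<Sum>u | length u = i. \<Sum>s | length s = n - i. f u * g s * H (u @ s))"
  proof (rule sum.cong[OF refl])
    fix i assume i: "i \<in> {..n}"
    have "(\<Sum>w | length w = n. f (take i w) * g (drop i w) * H w) =
          (\<Sum>(u, s) \<in> {u. length u = i} \<times> {s. length s = n - i}. f u * g s * H (u @ s))"
      by (rule sum.reindex_bij_witness[where i = "\<lambda>(u, s). u @ s" and j = "\<lambda>w. (take i w, drop i w)"])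
        (use i in auto)
    then show "(\<Sum>w | length w = n. f (take i w) * g (drop i w) * H w) =
          (\<Sum>u | length u = i. \<Sum>s | length s = n - i. f u * g s * H (u @ s))"
      by (simp add: sum.cartesian_product finite_words_length)
  qed
  finally show ?thesis .
qed

lemma nc_ideal_annihilated:
  assumes generators: "\<And>r u s j. r \<in> R \<Longrightarrow> (\<Sum>x | length x = j. r x * H (u @ x @ s)) = 0"
    and g: "g \<in> nc_ideal R"
  shows "(\<Sum>w | length w = n. g w * H w) = (0::'k::field)"
proof -
  let ?Z = "{g :: bool list \<Rightarrow> 'k. \<forall>n. (\<Sum>w | length w = n. g w * H w) = 0}"
  have "ncmult a (ncmult r b) \<in> ?Z" if r: "r \<in> R" for a r b
  proof -
    have inner: "(\<Sum>s | length s = m. ncmult r b s * H (u @ s)) = 0" for u m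
    proof -
      have "(\<Sum>s | length s = m. ncmult r b s * H (u @ s)) =
            (\<Sum>j\<le>m. \<Sum>x | length x = j. \<Sum>y | length y = m - j. r x * b y * H (u @ x @ y))"
        by (rule sum_words_ncmult)
      also have "\<dots> = (\<Sum>j\<le>m. \<Sum>y | length y = m - j. b y * (\<Sum>x | length x = j. r x * H (u @ x @ y)))"
        by (subst sum.swap) (simp add: sum_distrib_left algebra_simps)
      also have "\<dots> = 0"
        using generators[OF r] by simp
      finally show ?thesis .
    qed
    have "(\<Sum>w | length w = n. ncmult a (ncmult r b) w * H w) = 0" for n
    proof -
      have "(\<Sum>w | length w = n. ncmult a (ncmult r b) w * H w) =
            (\<Sum>i\<le>n. \<Sum>v | length v = i. \<Sum>s | length s = n - i. a v * ncmult r b s * H (v @ s))"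
        by (rule sum_words_ncmult)
      also have "\<dots> = (\<Sum>i\<le>n. \<Sum>v | length v = i. a v * (\<Sum>s | length s = n - i. ncmult r b s * H (v @ s)))"
        by (simp add: sum_distrib_left mult.assoc)
      also have "\<dots> = 0"
        using inner by simp
      finally show ?thesis .
    qed
    then show ?thesis by blast
  qed
  moreover have "free.subspace ?Z"
    by (auto simp: free.subspace_def ncscale_def sum.distrib algebra_simps
        simp flip: sum_distrib_left)
  ultimately have "nc_ideal R \<subseteq> ?Z"
    unfolding nc_ideal_def by (intro free.span_minimal) auto
  with g show ?thesis by blast
qed

section \<open>Normal-form operators and the Hilbert function\<close>

lemma nc_hom_expansion:
  assumes "f \<in> nc_hom n"
  shows "f = (\<Sum>w | length w = n. ncscale (f w) (mon w))"
proof
  fix v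
  have "(\<Sum>w | length w = n. ncscale (f w) (mon w)) v = (\<Sum>w | length w = n. if v = w then f w else 0)"
    by (simp add: sum_fun_apply ncscale_def mon_def if_distrib cong: if_cong)
  also have "\<dots> = f v"
    using assms by (auto simp: nc_hom_def finite_words_length)
  finally show "f v = (\<Sum>w | length w = n. ncscale (f w) (mon w)) v" by simp
qed

lemma inj_on_if_delta:
  assumes "\<And>s s'. s \<in> S \<Longrightarrow> s' \<in> S \<Longrightarrow> g s s' = (if s = s' then 1 else (0::'k::field))"
  shows "inj_on g S"
  by (rule inj_onI) (metis assms zero_neq_one)

lemma independent_if_delta:
  assumes "finite S"
    and delta: "\<And>s s'. s \<in> S \<Longrightarrow> s' \<in> S \<Longrightarrow> g s s' = (if s = s' then 1 else (0::'k::field))"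
  shows "free.independent (g ` S)"
proof (rule free.independent_if_scalars_zero)
  show "finite (g ` S)" using assms(1) by simp
next
  fix c x assume sum0: "(\<Sum>y\<in>g ` S. ncscale (c y) y) = 0" and "x \<in> g ` S"
  then obtain s where s: "s \<in> S" "x = g s" by blast
  have inj: "inj_on g S" using delta by (rule inj_on_if_delta)
  have "0 = (\<Sum>y\<in>g ` S. ncscale (c y) y) s" using sum0 by simp
  also have "\<dots> = (\<Sum>s'\<in>S. c (g s') * g s' s)"
    by (simp add: sum_fun_apply ncscale_def sum.reindex[OF inj])
  also have "\<dots> = (\<Sum>s'\<in>S. if s' = s then c (g s') else 0)"
    using s delta by (intro sum.cong) auto
  also have "\<dots> = c (g s)"
    using s assms(1) by simp
  finally show "c x = 0" using s by simp
qed

lemma dim_nc_hom: "free.dim (nc_hom n :: (bool list \<Rightarrow> 'k::field) set) = 2 ^ n"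
proof (rule free.dim_unique)
  let ?B = "mon ` {w. length w = n} :: (bool list \<Rightarrow> 'k) set"
  have delta: "mon s s' = (if s = s' then 1 else (0::'k))" for s s'
    by (simp add: mon_def eq_commute)
  show "?B \<subseteq> nc_hom n"
    by (auto simp: nc_hom_def mon_def)
  show "nc_hom n \<subseteq> free.span ?B"
  proof
    fix f :: "bool list \<Rightarrow> 'k" assume "f \<in> nc_hom n"
    then have "f = (\<Sum>w | length w = n. ncscale (f w) (mon w))"
      by (rule nc_hom_expansion)
    also have "\<dots> \<in> free.span ?B"
      by (intro free.span_sum free.span_scale free.span_base) simp
    finally show "f \<in> free.span ?B" .
  qed
  show "free.independent ?B"
    by (rule independent_if_delta) (simp_all add: finite_words_length delta)
  show "card ?B = 2 ^ n"
    by (subst card_image) (simp_all add: inj_on_if_delta delta card_words_length)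
qed

locale nc_normal_form =
  fixes I :: "(bool list \<Rightarrow> 'k::field) set"
    and N :: "bool list \<Rightarrow> bool list \<Rightarrow> 'k"
    and normal :: "bool list \<Rightarrow> bool"
  assumes mon_minus_N_in: "mon w - N w \<in> I"
    and N_normal: "normal w \<Longrightarrow> N w = mon w"
    and N_support: "N w v \<noteq> 0 \<Longrightarrow> length v = length w \<and> normal v"
    and N_annihilates: "f \<in> I \<Longrightarrow> (\<Sum>w | length w = length v. f w * N w v) = 0"
begin

lemma ideal_hom_expansion:
  assumes f: "f \<in> I \<inter> nc_hom n"
  shows "f = (\<Sum>w \<in> {w. length w = n \<and> \<not> normal w}. ncscale (f w) (mon w - N w))"
proof -
  have N_part: "(\<Sum>w | length w = n. f w * N w v) = 0" for v
  proof (cases "length v = n")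
    case True
    then show ?thesis using N_annihilates f by blast
  next
    case False
    then show ?thesis using N_support by (intro sum.neutral) fastforce
  qed
  have "f = (\<Sum>w | length w = n. ncscale (f w) (mon w))"
    using f by (intro nc_hom_expansion) blast
  also have "\<dots> = (\<Sum>w | length w = n. ncscale (f w) (mon w - N w))"
    using N_part by (simp add: fun_eq_iff sum_fun_apply ncscale_def algebra_simps sum_subtractf)
  also have "\<dots> = (\<Sum>w \<in> {w. length w = n \<and> \<not> normal w}. ncscale (f w) (mon w - N w))"
    by (rule sum.mono_neutral_right) (auto simp: finite_words_length N_normal free.scale_zero_right)
  finally show ?thesis .
qed

lemma dim_ideal_hom: "free.dim (I \<inter> nc_hom n) = card {w. length w = n \<and> \<not> normal w}"
proof (rule free.dim_unique)
  let ?R = "{w. length w = n \<and> \<not> normal w}"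
  let ?B = "(\<lambda>w. mon w - N w) ` ?R"
  have finite: "finite ?R"
    by (rule finite_subset[OF _ finite_words_length[of n]]) auto
  have delta: "(mon s - N s) s' = (if s = s' then 1 else 0)" if "s' \<in> ?R" for s s'
    using that N_support[of s s'] by (auto simp: mon_def)
  show "?B \<subseteq> I \<inter> nc_hom n"
    using mon_minus_N_in N_support by (fastforce simp: nc_hom_def mon_def)
  show "I \<inter> nc_hom n \<subseteq> free.span ?B"
  proof
    fix f assume "f \<in> I \<inter> nc_hom n"
    then have "f = (\<Sum>w \<in> ?R. ncscale (f w) (mon w - N w))"
      by (rule ideal_hom_expansion)
    also have "\<dots> \<in> free.span ?B"
      by (intro free.span_sum free.span_scale free.span_base) simp
    finally show "f \<in> free.span ?B" .
  qed
  show "free.independent ?B"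
    using finite delta by (rule independent_if_delta)
  show "card ?B = card ?R"
    using delta by (intro card_image inj_on_if_delta)
qed

lemma quot_dim_eq_card_normal: "quot_dim I n = card {w. length w = n \<and> normal w}"
proof -
  have "{w. length w = n \<and> \<not> normal w} \<union> {w. length w = n \<and> normal w} = {w. length w = n}"
    by blast
  then have "card {w. length w = n \<and> \<not> normal w} + card {w. length w = n \<and> normal w} = 2 ^ n"
    by (subst card_Un_disjoint[symmetric])
      (auto simp: card_words_length intro: finite_subset[OF _ finite_words_length[of n]])
  then show ?thesis
    by (simp add: quot_dim_def dim_nc_hom dim_ideal_hom)
qed

end

section \<open>Generating functions of gradings\<close>

definition finite_fibres :: "('a \<Rightarrow> nat) \<Rightarrow> bool" where
  "finite_fibres f \<longleftrightarrow> (\<forall>n. finite {x. f x = n})"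

definition fibre_card :: "('a \<Rightarrow> nat) \<Rightarrow> nat \<Rightarrow> nat" where
  "fibre_card f n = card {x. f x = n}"

definition fibre_gf :: "('a \<Rightarrow> nat) \<Rightarrow> 'b::comm_ring_1 fps" where
  "fibre_gf f = Abs_fps (\<lambda>n. of_nat (fibre_card f n))"

lemma finite_fibres_add:
  assumes "finite_fibres f" "finite_fibres g"
  shows "finite_fibres (\<lambda>(x, y). f x + g y)"
  unfolding finite_fibres_def
proof
  fix n
  have "{xy. (case xy of (x, y) \<Rightarrow> f x + g y) = n} \<subseteq> (\<Union>k\<le>n. {x. f x = k}) \<times> (\<Union>k\<le>n. {y. g y = k})"
    by auto
  moreover have "finite ((\<Union>k\<le>n. {x. f x = k}) \<times> (\<Union>k\<le>n. {y. g y = k}))"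
    using assms by (auto simp: finite_fibres_def)
  ultimately show "finite {xy. (case xy of (x, y) \<Rightarrow> f x + g y) = n}"
    by (rule finite_subset)
qed

lemma finite_fibres_multiples: "0 < d \<Longrightarrow> finite_fibres (\<lambda>m::nat. d * m)"
  unfolding finite_fibres_def
proof
  fix n
  show "0 < d \<Longrightarrow> finite {m. d * m = n}"
    by (rule finite_subset[of _ "{..n}"]) auto
qed

lemma fibre_card_add:
  assumes "finite_fibres f" "finite_fibres g"
  shows "fibre_card (\<lambda>(x, y). f x + g y) n = (\<Sum>k\<le>n. fibre_card f k * fibre_card g (n - k))"
proof -
  have "fibre_card (\<lambda>(x, y). f x + g y) n = card (SIGMA k:{..n}. {x. f x = k} \<times> {y. g y = n - k})"
    unfolding fibre_card_def
    by (rule bij_betw_same_card[where f = "\<lambda>(x, y). (f x, x, y)"],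
        rule bij_betw_byWitness[where f' = "\<lambda>(k, xy). xy"]) auto
  also have "\<dots> = (\<Sum>k\<le>n. fibre_card f k * fibre_card g (n - k))"
    using assms by (simp add: card_SigmaI card_cartesian_product fibre_card_def finite_fibres_def)
  finally show ?thesis .
qed

lemma fibre_gf_add:
  "finite_fibres f \<Longrightarrow> finite_fibres g \<Longrightarrow>
    fibre_gf (\<lambda>(x, y). f x + g y) = fibre_gf f * fibre_gf g"
  by (simp add: fps_eq_iff fibre_gf_def fps_mult_nth fibre_card_add atLeast0AtMost)

lemma fibre_gf_multiples:
  assumes "0 < d"
  shows "fibre_gf (\<lambda>m::nat. d * m) * (1 - fps_X ^ d) = (1 :: 'a::comm_ring_1 fps)"
proof (rule fps_ext)
  fix n
  have card: "fibre_card (\<lambda>m::nat. d * m) k = (if d dvd k then 1 else 0)" for k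
  proof -
    have "{m. d * m = k} = (if d dvd k then {k div d} else {})"
      using assms by auto
    then show ?thesis by (simp add: fibre_card_def)
  qed
  have "(fibre_gf (\<lambda>m::nat. d * m) * (1 - fps_X ^ d)) $ n =
      (fibre_gf (\<lambda>m::nat. d * m) :: 'a fps) $ n
      - (if d \<le> n then (fibre_gf (\<lambda>m::nat. d * m) :: 'a fps) $ (n - d) else 0)"
    by (simp add: right_diff_distrib fps_X_power_mult_right_nth)
  also have "\<dots> = (1 :: 'a fps) $ n"
  proof (cases "d \<le> n")
    case True
    then have "d dvd n - d \<longleftrightarrow> d dvd n" "n \<noteq> 0"
      using assms by (auto simp: dvd_minus_self)
    then show ?thesis using True by (simp add: fibre_gf_def card)
  next
    case False
    then have "d dvd n \<longleftrightarrow> n = 0"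
      using assms by (auto dest: dvd_imp_le)
    then show ?thesis using False by (simp add: fibre_gf_def card)
  qed
  finally show "(fibre_gf (\<lambda>m::nat. d * m) * (1 - fps_X ^ d)) $ n = (1 :: 'a fps) $ n" .
qed

section \<open>The rewriting system and the diamond lemma\<close>

(* Rule3 and Rule4 orient r3 and r4; Rule5 is the S-polynomial of their overlap z1^3 z2^2,
   divided by p (see rule_poly_in_ideal). *)
datatype rule = Rule3 | Rule4 | Rule5

fun lhs :: "rule \<Rightarrow> bool list" where
  "lhs Rule3 = [z1, z2, z2]"
| "lhs Rule4 = [z1, z1, z1, z2]"
| "lhs Rule5 = [z1, z1, z2, z1, z2]"

fun rhs :: "'k::field \<Rightarrow> rule \<Rightarrow> ('k \<times> bool list) list" where
  "rhs p Rule3 = [(p^2, [z2, z2, z1])]"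
| "rhs p Rule4 = [(-p, [z1, z1, z2, z1]), (-(p^2), [z1, z2, z1, z1]), (-(p^3), [z2, z1, z1, z1])]"
| "rhs p Rule5 = [(-p, [z1, z2, z1, z1, z2]), (p^3, [z2, z1, z1, z2, z1]), (p^4, [z2, z1, z2, z1, z1])]"

(* On words of equal length this is the lexicographic order with z1 > z2. *)
fun word_rank :: "bool list \<Rightarrow> nat" where
  "word_rank [] = 0"
| "word_rank (b # w) = (if b = z1 then 2 ^ length w else 0) + word_rank w"

lemma word_rank_append: "word_rank (u @ v) = word_rank u * 2 ^ length v + word_rank v"
  by (induction u) (auto simp: algebra_simps power_add)

lemma word_rank_less_in_context:
  "length u = length v \<Longrightarrow> word_rank u < word_rank v \<Longrightarrow> word_rank (A @ u @ C) < word_rank (A @ v @ C)"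
  by (simp add: word_rank_append)

lemma rhs_smaller:
  "(c, u) \<in> set (rhs p r) \<Longrightarrow> length u = length (lhs r) \<and> word_rank u < word_rank (lhs r)"
  by (cases r) auto

fun redex :: "bool list \<Rightarrow> bool list \<times> rule \<times> bool list \<Rightarrow> bool" where
  "redex w (A, r, C) \<longleftrightarrow> w = A @ lhs r @ C"

definition reducible :: "bool list \<Rightarrow> bool" where
  "reducible w \<longleftrightarrow> (\<exists>t. redex w t)"

lemma rewrite_rank_less:
  "redex w (A, r, C) \<Longrightarrow> (c, u) \<in> set (rhs p r) \<Longrightarrow> word_rank (A @ u @ C) < word_rank w"
  using rhs_smaller[of c u p r] by (simp add: word_rank_less_in_context)

lemma someI_redex: "reducible w \<Longrightarrow> redex w (SOME t. redex w t)"
  unfolding reducible_def by (rule someI_ex)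

(* nf p w v is the coefficient of v in the normal form of w; by nf_redex the arbitrary choice
   of the redex to reduce first does not matter. *)
function nf :: "'k::field \<Rightarrow> bool list \<Rightarrow> bool list \<Rightarrow> 'k" where
  "nf p w v =
    (if reducible w then
       (case SOME t. redex w t of (A, r, C) \<Rightarrow> \<Sum>(c, u) \<leftarrow> rhs p r. c * nf p (A @ u @ C) v)
     else mon w v)"
  by pat_completeness auto
termination
  by (relation "measure (\<lambda>(p, w, v). word_rank w)")
    (auto, metis rewrite_rank_less someI_redex)

declare nf.simps [simp del]

fun nf_step :: "'k::field \<Rightarrow> bool list \<times> rule \<times> bool list \<Rightarrow> bool list \<Rightarrow> 'k" where
  "nf_step p (A, r, C) v = (\<Sum>(c, u) \<leftarrow> rhs p r. c * nf p (A @ u @ C) v)"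

lemma nf_reducible: "reducible w \<Longrightarrow> nf p w v = nf_step p (SOME t. redex w t) v"
  by (subst nf.simps) (simp split: prod.split)

lemma nf_irreducible: "\<not> reducible w \<Longrightarrow> nf p w = mon w"
  by (rule ext, subst nf.simps) simp

lemma overlap_cases:
  assumes "drop d (lhs r) @ C = lhs r' @ C'" "d < length (lhs r)"
  shows "d = 0 \<and> r = r' \<and> C = C'
    \<or> r = Rule4 \<and> r' = Rule3 \<and> d = 2 \<and> C = [z2] @ C'
    \<or> r = Rule4 \<and> r' = Rule5 \<and> d = 1 \<and> C = [z1, z2] @ C'
    \<or> r = Rule5 \<and> r' = Rule3 \<and> d = 3 \<and> C = [z2] @ C'"
proof -
  have "d \<in> {0, 1, 2, 3, 4}" using assms(2) by (cases r) auto
  then show ?thesis using assms by (cases r; cases r') auto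
qed

(* The induction hypothesis of the diamond lemma. *)
context
  fixes p :: "'k::field" and w v :: "bool list"
  assumes confluent_below: "\<And>w' t. word_rank w' < word_rank w \<Longrightarrow> redex w' t \<Longrightarrow> nf p w' v = nf_step p t v"
begin

lemma nf_smaller_redex:
  assumes "w = A @ W @ C" "length u = length W" "word_rank u < word_rank W" "u = X @ lhs r @ Y"
  shows "nf p (A @ u @ C) v = nf_step p (A @ X, r, Y @ C) v"
proof (rule confluent_below)
  show "word_rank (A @ u @ C) < word_rank w"
    using assms(1-3) by (simp add: word_rank_less_in_context)
qed (simp add: assms(4))

lemma disjoint_redexes_agree:
  assumes w: "w = A @ lhs r @ B @ lhs r' @ C"
  shows "nf_step p (A, r, B @ lhs r' @ C) v = nf_step p (A @ lhs r @ B, r', C) v"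
proof -
  have left: "nf p (A @ u @ B @ lhs r' @ C) v = nf_step p (A @ u @ B, r', C) v"
    if "(c, u) \<in> set (rhs p r)" for c u
    using that w rewrite_rank_less[of w A r "B @ lhs r' @ C"] by (intro confluent_below) auto
  have right: "nf p (A @ lhs r @ B @ u' @ C) v = nf_step p (A, r, B @ u' @ C) v"
    if "(c', u') \<in> set (rhs p r')" for c' u'
    using that w rewrite_rank_less[of w "A @ lhs r @ B" r' C] by (intro confluent_below) auto
  have "nf_step p (A, r, B @ lhs r' @ C) v =
    (\<Sum>(c, u) \<leftarrow> rhs p r. \<Sum>(c', u') \<leftarrow> rhs p r'. c * c' * nf p (A @ u @ B @ u' @ C) v)"
    using left by (auto simp: sum_list_const_mult[symmetric] mult.assoc
        intro!: arg_cong[where f = sum_list] map_cong)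
  also have "\<dots> = (\<Sum>(c', u') \<leftarrow> rhs p r'. \<Sum>(c, u) \<leftarrow> rhs p r. c * c' * nf p (A @ u @ B @ u' @ C) v)"
    unfolding split_def by (rule sum_list_map_swap)
  also have "\<dots> = nf_step p (A @ lhs r @ B, r', C) v"
    using right by (auto simp: sum_list_const_mult[symmetric] mult_ac
        intro!: arg_cong[where f = sum_list] map_cong)
  finally show ?thesis .
qed

lemma overlap_Rule4_Rule3_resolvable:
  assumes w: "w = A @ [z1, z1, z1, z2, z2] @ C"
  shows "nf_step p (A, Rule4, [z2] @ C) v = nf_step p (A @ [z1, z1], Rule3, C) v"
proof -
  have reductions:
    "nf p (A @ [z1, z1, z2, z1, z2] @ C) v = nf_step p (A @ [], Rule5, [] @ C) v"
    "nf p (A @ [z2, z1, z1, z1, z2] @ C) v = nf_step p (A @ [z2], Rule4, [] @ C) v"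
    "nf p (A @ [z1, z1, z2, z2, z1] @ C) v = nf_step p (A @ [z1], Rule3, [z1] @ C) v"
    "nf p (A @ [z1, z2, z2, z1, z1] @ C) v = nf_step p (A @ [], Rule3, [z1, z1] @ C) v"
    by (rule nf_smaller_redex[OF w]; simp)+
  show ?thesis by (simp add: reductions[simplified]) algebra
qed

lemma overlap_Rule4_Rule5_resolvable:
  assumes w: "w = A @ [z1, z1, z1, z2, z1, z2] @ C"
  shows "nf_step p (A, Rule4, [z1, z2] @ C) v = nf_step p (A @ [z1], Rule5, C) v"
proof -
  have reductions:
    "nf p (A @ [z1, z2, z1, z1, z1, z2] @ C) v = nf_step p (A @ [z1, z2], Rule4, [] @ C) v"
    "nf p (A @ [z1, z2, z2, z1, z1, z1] @ C) v = nf_step p (A @ [], Rule3, [z1, z1, z1] @ C) v"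
    "nf p (A @ [z2, z1, z1, z1, z1, z2] @ C) v = nf_step p (A @ [z2, z1], Rule4, [] @ C) v"
    "nf p (A @ [z2, z1, z1, z1, z2, z1] @ C) v = nf_step p (A @ [z2], Rule4, [z1] @ C) v"
    by (rule nf_smaller_redex[OF w]; simp)+
  show ?thesis by (simp add: reductions[simplified]) algebra
qed

lemma overlap_Rule5_Rule3_resolvable:
  assumes w: "w = A @ [z1, z1, z2, z1, z2, z2] @ C"
  shows "nf_step p (A, Rule5, [z2] @ C) v = nf_step p (A @ [z1, z1, z2], Rule3, C) v"
proof -
  have reductions:
    "nf p (A @ [z1, z2, z1, z1, z2, z2] @ C) v = nf_step p (A @ [z1, z2, z1], Rule3, [] @ C) v"
    "nf p (A @ [z1, z2, z1, z2, z2, z1] @ C) v = nf_step p (A @ [z1, z2], Rule3, [z1] @ C) v"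
    "nf p (A @ [z1, z2, z2, z2, z1, z1] @ C) v = nf_step p (A @ [], Rule3, [z2, z1, z1] @ C) v"
    "nf p (A @ [z2, z1, z1, z2, z1, z2] @ C) v = nf_step p (A @ [z2], Rule5, [] @ C) v"
    "nf p (A @ [z1, z1, z2, z2, z2, z1] @ C) v = nf_step p (A @ [z1], Rule3, [z2, z1] @ C) v"
    "nf p (A @ [z1, z2, z2, z1, z2, z1] @ C) v = nf_step p (A @ [], Rule3, [z1, z2, z1] @ C) v"
    by (rule nf_smaller_redex[OF w]; simp)+
  show ?thesis by (simp add: reductions[simplified]) algebra
qed

lemma redexes_agree:
  assumes t: "redex w (A, r, C)" and t': "redex w (A', r', C')" and le: "length A \<le> length A'"
  shows "nf_step p (A, r, C) v = nf_step p (A', r', C') v"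
proof -
  define D where "D = drop (length A) A'"
  have w: "w = A @ lhs r @ C" using t by simp
  have "A = take (length A) A'" and shifted: "lhs r @ C = D @ lhs r' @ C'"
    using t t' le unfolding D_def by (auto simp: append_eq_append_conv_if)
  then have A': "A' = A @ D"
    unfolding D_def by (metis append_take_drop_id)
  show ?thesis
  proof (cases "length (lhs r) \<le> length D")
    case True
    define B where "B = drop (length (lhs r)) D"
    have "lhs r = take (length (lhs r)) D" and C: "C = B @ lhs r' @ C'"
      using shifted True unfolding B_def by (auto simp: append_eq_append_conv_if)
    then have D: "D = lhs r @ B"
      unfolding B_def by (metis append_take_drop_id)
    show ?thesis
      using disjoint_redexes_agree[of A r B r' C'] w unfolding A' D C by simp
  next
    case False
    then have D: "D = take (length D) (lhs r)" and overlap: "drop (length D) (lhs r) @ C = lhs r' @ C'"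
      using shifted by (auto simp: append_eq_append_conv_if)
    have "length D < length (lhs r)" using False by simp
    from overlap_cases[OF overlap this] show ?thesis
    proof (elim disjE conjE)
      assume "length D = 2" "r = Rule4" "r' = Rule3" "C = [z2] @ C'"
      then show ?thesis
        using overlap_Rule4_Rule3_resolvable[of A C'] w D A' by simp
    next
      assume "length D = 1" "r = Rule4" "r' = Rule5" "C = [z1, z2] @ C'"
      then show ?thesis
        using overlap_Rule4_Rule5_resolvable[of A C'] w D A' by simp
    next
      assume "length D = 3" "r = Rule5" "r' = Rule3" "C = [z2] @ C'"
      then show ?thesis
        using overlap_Rule5_Rule3_resolvable[of A C'] w D A' by simp
    qed (use A' in simp_all)
  qed
qed

end

theorem nf_redex: "redex w t \<Longrightarrow> nf p w v = nf_step p t v"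
proof (induction "word_rank w" arbitrary: w t rule: less_induct)
  case less
  have IH: "\<And>w' t. word_rank w' < word_rank w \<Longrightarrow> redex w' t \<Longrightarrow> nf p w' v = nf_step p t v"
    using less.hyps by blast
  have reducible: "reducible w"
    using less.prems unfolding reducible_def by blast
  obtain A r C where s: "(SOME t. redex w t) = (A, r, C)" by (metis prod_cases3)
  obtain A' r' C' where t: "t = (A', r', C')" by (metis prod_cases3)
  have s_redex: "redex w (A, r, C)" and t_redex: "redex w (A', r', C')"
    using someI_redex[OF reducible] s less.prems t by simp_all
  have "nf_step p (A, r, C) v = nf_step p (A', r', C') v"
  proof (cases "length A \<le> length A'")
    case True
    then show ?thesis using redexes_agree[OF IH s_redex t_redex] by simp
  next
    case False
    then show ?thesis using redexes_agree[OF IH t_redex s_redex] by simp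
  qed
  then show ?case by (simp add: nf_reducible[OF reducible] s t)
qed

lemma nf_support: "nf p w v \<noteq> 0 \<Longrightarrow> length v = length w \<and> \<not> reducible v"
proof (induction "word_rank w" arbitrary: w rule: less_induct)
  case less
  show ?case
  proof (cases "reducible w")
    case True
    then obtain A r C where t: "redex w (A, r, C)"
      unfolding reducible_def by (metis prod_cases3)
    with less.prems obtain c u where cu: "(c, u) \<in> set (rhs p r)" and "nf p (A @ u @ C) v \<noteq> 0"
      using sum_list_map_neutral[of "rhs p r" "\<lambda>(c, u). c * nf p (A @ u @ C) v"]
      by (fastforce simp: nf_redex)
    with less.hyps[OF rewrite_rank_less[OF t cu]] show ?thesis
      using t rhs_smaller[OF cu] by simp
  next
    case False
    with less.prems show ?thesis by (auto simp: nf_irreducible mon_def split: if_splits)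
  qed
qed

definition rule_poly :: "'k::field \<Rightarrow> rule \<Rightarrow> bool list \<Rightarrow> bool list \<Rightarrow> (bool list \<Rightarrow> 'k)" where
  "rule_poly p r A C = mon (A @ lhs r @ C) - (\<Sum>(c, u) \<leftarrow> rhs p r. ncscale c (mon (A @ u @ C)))"

lemma r3_eq_rule_poly: "r3 p = rule_poly p Rule3 [] []"
  by (simp add: fun_eq_iff r3_def rule_poly_def ncscale_def)

lemma r4_eq_rule_poly: "r4 p = rule_poly p Rule4 [] []"
  by (simp add: fun_eq_iff r4_def rule_poly_def ncscale_def)

lemma sum_words_rule_poly:
  "(\<Sum>x | length x = j. rule_poly p r [] [] x * H x) =
    (if j = length (lhs r) then H (lhs r) - (\<Sum>(c, u) \<leftarrow> rhs p r. c * H u) else 0)"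
proof -
  have "(\<Sum>x | length x = j. rule_poly p r [] [] x * H x) =
        (\<Sum>x | length x = j. mon (lhs r) x * H x) -
        (\<Sum>(c, u) \<leftarrow> rhs p r. c * (\<Sum>x | length x = j. mon u x * H x))"
    by (simp add: rule_poly_def sum_list_fun_apply ncscale_def split_def sum_subtractf
        left_diff_distrib sum_list_mult_const[symmetric] sum_sum_list_swap sum_distrib_left mult.assoc)
  also have "\<dots> = (if j = length (lhs r) then H (lhs r) - (\<Sum>(c, u) \<leftarrow> rhs p r. c * H u) else 0)"
  proof (cases "j = length (lhs r)")
    case True
    then show ?thesis
      using rhs_smaller[of _ _ p r]
      by (auto simp: sum_words_mon intro!: arg_cong[where f = sum_list] map_cong)
  next
    case False
    then show ?thesis
      using rhs_smaller[of _ _ p r] by (auto simp: sum_words_mon intro!: sum_list_map_neutral)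
  qed
  finally show ?thesis .
qed

lemma nf_annihilates_rule_poly:
  "(\<Sum>x | length x = j. rule_poly p r [] [] x * nf p (u @ x @ s) v) = 0"
  using nf_redex[of "u @ lhs r @ s" "(u, r, s)" p v] by (simp add: sum_words_rule_poly)

lemma nf_annihilates_ideal:
  "g \<in> nc_ideal {r3 p, r4 p} \<Longrightarrow> (\<Sum>w | length w = n. g w * nf p w v) = 0"
  by (rule nc_ideal_annihilated)
    (auto simp: r3_eq_rule_poly r4_eq_rule_poly nf_annihilates_rule_poly)

lemma rule_poly_sandwich:
  "rule_poly p r A C = ncmult (mon A) (ncmult (rule_poly p r [] []) (mon C))"
  by (cases r) (simp_all add: rule_poly_def ncmult_linear ncmult_mon_mon)

lemma rule_poly_in_ideal:
  assumes "p \<noteq> 0"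
  shows "rule_poly p r A C \<in> nc_ideal {r3 p, r4 p}"
proof -
  have generators: "rule_poly p Rule3 A C \<in> nc_ideal {r3 p, r4 p}"
    "rule_poly p Rule4 A C \<in> nc_ideal {r3 p, r4 p}" for A C
    by (simp_all add: rule_poly_sandwich[of p _ A C] r3_eq_rule_poly r4_eq_rule_poly
        sandwich_in_nc_ideal)
  have "ncscale p (rule_poly p Rule5 A C) =
    rule_poly p Rule4 A ([z2] @ C) - rule_poly p Rule3 (A @ [z1, z1]) C
    - ncscale (p^2) (rule_poly p Rule3 (A @ [z1]) ([z1] @ C))
    - ncscale (p^4) (rule_poly p Rule3 A ([z1, z1] @ C))
    - ncscale (p^3) (rule_poly p Rule4 (A @ [z2]) C)"
    by (simp add: rule_poly_def fun_eq_iff ncscale_def) algebra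
  also have "\<dots> \<in> nc_ideal {r3 p, r4 p}"
    by (intro free.subspace_diff free.subspace_scale subspace_nc_ideal generators)
  finally have "ncscale (inverse p) (ncscale p (rule_poly p Rule5 A C)) \<in> nc_ideal {r3 p, r4 p}"
    by (rule free.subspace_scale[OF subspace_nc_ideal])
  then have "rule_poly p Rule5 A C \<in> nc_ideal {r3 p, r4 p}"
    using assms by simp
  with generators show ?thesis by (cases r) simp_all
qed

lemma mon_minus_nf_in_ideal:
  assumes "p \<noteq> 0"
  shows "mon w - nf p w \<in> nc_ideal {r3 p, r4 p}"
proof (induction "word_rank w" arbitrary: w rule: less_induct)
  case less
  show ?case
  proof (cases "reducible w")
    case True
    then obtain A r C where t: "redex w (A, r, C)"
      unfolding reducible_def by (metis prod_cases3)
    have "mon w - nf p w = rule_poly p r A C +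
        (\<Sum>(c, u) \<leftarrow> rhs p r. ncscale c (mon (A @ u @ C) - nf p (A @ u @ C)))"
      using t nf_redex[OF t, of p]
      by (simp add: fun_eq_iff rule_poly_def sum_list_fun_apply ncscale_def split_def
          right_diff_distrib sum_list_subtractf)
    also have "\<dots> \<in> nc_ideal {r3 p, r4 p}"
    proof (intro free.subspace_add[OF subspace_nc_ideal] nc_ideal_sum_list rule_poly_in_ideal[OF assms])
      fix cu assume "cu \<in> set (rhs p r)"
      moreover obtain c u where "cu = (c, u)" by fastforce
      ultimately show "(\<lambda>(c, u). ncscale c (mon (A @ u @ C) - nf p (A @ u @ C))) cu \<in> nc_ideal {r3 p, r4 p}"
        using less.hyps[OF rewrite_rank_less[OF t]]
        by (auto intro!: free.subspace_scale[OF subspace_nc_ideal])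
    qed
    finally show ?thesis .
  next
    case False
    then show ?thesis
      by (simp add: nf_irreducible free.subspace_0[OF subspace_nc_ideal])
  qed
qed

section \<open>Irreducible words\<close>

lemma reducible_Cons: "reducible (b # w) \<longleftrightarrow> (\<exists>r C. b # w = lhs r @ C) \<or> reducible w"
proof
  assume "reducible (b # w)"
  then obtain A r C where bw: "b # w = A @ lhs r @ C"
    unfolding reducible_def by (metis prod_cases3 redex.simps)
  show "(\<exists>r C. b # w = lhs r @ C) \<or> reducible w"
  proof (cases A)
    case Nil
    then show ?thesis using bw by auto
  next
    case (Cons a A')
    then have "redex w (A', r, C)" using bw by simp
    then show ?thesis unfolding reducible_def by blast
  qed
next
  assume "(\<exists>r C. b # w = lhs r @ C) \<or> reducible w"
  then show "reducible (b # w)"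
    unfolding reducible_def by (metis append_Cons append_Nil redex.simps prod_cases3)
qed

lemma not_reducible_Nil: "\<not> reducible []"
proof -
  have "lhs r \<noteq> []" for r by (cases r) auto
  then show ?thesis by (auto simp: reducible_def elim!: redex.elims)
qed

lemma reducible_z2_Cons: "reducible (z2 # w) \<longleftrightarrow> reducible w"
proof -
  have "z2 # w \<noteq> lhs r @ C" for r C by (cases r) auto
  then show ?thesis using reducible_Cons by blast
qed

lemma reducible_z1_Cons:
  "reducible (z1 # w) \<longleftrightarrow> reducible w \<or> (\<exists>C. w = [z2, z2] @ C)
     \<or> (\<exists>C. w = [z1, z1, z2] @ C) \<or> (\<exists>C. w = [z1, z2, z1, z2] @ C)"
proof -
  have ex_rule: "(\<exists>r. P r) \<longleftrightarrow> P Rule3 \<or> P Rule4 \<or> P Rule5" for P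
    by (metis rule.exhaust)
  show ?thesis
    by (subst reducible_Cons) (auto simp: ex_rule)
qed

fun standard_word :: "nat \<times> nat \<times> nat \<times> nat \<Rightarrow> bool list" where
  "standard_word (Suc a, i, j, c) = z2 # standard_word (a, i, j, c)"
| "standard_word (0, Suc i, j, c) = z1 # z2 # standard_word (0, i, j, c)"
| "standard_word (0, 0, Suc j, c) = z1 # z1 # z2 # standard_word (0, 0, j, c)"
| "standard_word (0, 0, 0, c) = replicate c z1"

fun exponents :: "bool list \<Rightarrow> nat \<times> nat \<times> nat \<times> nat" where
  "exponents [] = (0, 0, 0, 0)"
| "exponents (z2 # w) = (case exponents w of (a, i, j, c) \<Rightarrow> (Suc a, i, j, c))"
| "exponents (z1 # z2 # w) = (case exponents w of (a, i, j, c) \<Rightarrow> (0, Suc i, j, c))"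
| "exponents (z1 # z1 # z2 # w) = (case exponents w of (a, i, j, c) \<Rightarrow> (0, 0, Suc j, c))"
| "exponents (z1 # w) = (case exponents w of (a, i, j, c) \<Rightarrow> (0, 0, 0, Suc c))"

definition standard_degree :: "nat \<times> nat \<times> nat \<times> nat \<Rightarrow> nat" where
  "standard_degree = (\<lambda>(a, i, j, c). a + 2 * i + 3 * j + c)"

lemma length_standard_word: "length (standard_word e) = standard_degree e"
  by (induction e rule: standard_word.induct) (auto simp: standard_degree_def)

lemma exponents_z1_power: "exponents (replicate c z1) = (0, 0, 0, c)"
proof (induction c)
  case (Suc c)
  then show ?case by (cases c; cases "c - 1") auto
qed simp

lemma exponents_standard_word: "exponents (standard_word e) = e"
  by (induction e rule: standard_word.induct) (auto simp: exponents_z1_power)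

lemma z1_power_eq_Cons: "replicate c z1 = b # C \<longleftrightarrow> b = z1 \<and> 0 < c \<and> C = replicate (c - 1) z1"
  by (cases c) auto

lemma standard_word_eq_z2_Cons:
  "standard_word (a, i, j, c) = z2 # C \<longleftrightarrow> 0 < a \<and> C = standard_word (a - 1, i, j, c)"
  by (cases a; cases i; cases j) (auto simp: z1_power_eq_Cons)

lemma standard_word_eq_z1_Cons:
  "standard_word (a, i, j, c) = z1 # C \<longleftrightarrow> a = 0 \<and>
    (0 < i \<and> C = z2 # standard_word (0, i - 1, j, c) \<or>
     i = 0 \<and> (0 < j \<and> C = z1 # z2 # standard_word (0, 0, j - 1, c) \<or>
              j = 0 \<and> 0 < c \<and> C = replicate (c - 1) z1))"
  by (cases a; cases i; cases j) (auto simp: z1_power_eq_Cons)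

lemmas standard_word_eq_Cons = standard_word_eq_z2_Cons standard_word_eq_z1_Cons

lemma not_reducible_z1_power: "\<not> reducible (replicate c z1)"
proof (induction c)
  case 0
  then show ?case by (simp add: not_reducible_Nil)
next
  case (Suc c)
  then show ?case by (auto simp: reducible_z1_Cons z1_power_eq_Cons Cons_replicate_eq)
qed

lemma not_reducible_standard_word: "\<not> reducible (standard_word e)"
  by (induction e rule: standard_word.induct)
    (auto simp: reducible_z1_Cons reducible_z2_Cons not_reducible_z1_power standard_word_eq_Cons
      Cons_replicate_eq)

lemma standard_word_exponents: "\<not> reducible w \<Longrightarrow> standard_word (exponents w) = w"
  by (induction w rule: exponents.induct)
    (auto simp: reducible_z1_Cons reducible_z2_Cons not_reducible_Nil standard_word_eq_Cons
      z1_power_eq_Cons Cons_replicate_eq split: prod.splits)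

lemma card_irreducible_words:
  "card {w. length w = n \<and> \<not> reducible w} = fibre_card standard_degree n"
proof -
  have "bij_betw standard_word {e. standard_degree e = n} {w. length w = n \<and> \<not> reducible w}"
  proof (rule bij_betw_byWitness[where f' = exponents])
    show "exponents ` {w. length w = n \<and> \<not> reducible w} \<subseteq> {e. standard_degree e = n}"
    proof (rule image_subsetI)
      fix w assume "w \<in> {w. length w = n \<and> \<not> reducible w}"
      then have "length (standard_word (exponents w)) = n"
        by (simp add: standard_word_exponents)
      then show "exponents w \<in> {e. standard_degree e = n}"
        by (simp add: length_standard_word)
    qed
  qed (auto simp: length_standard_word exponents_standard_word standard_word_exponents
      not_reducible_standard_word)
  then show ?thesis
    unfolding fibre_card_def by (rule bij_betw_same_card[symmetric])
qed

lemma fibre_gf_standard_degree: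
  "fibre_gf standard_degree = inverse ((1 - fps_X)^2 * (1 - fps_X^2) * (1 - fps_X^3) :: 'a::field fps)"
proof (rule fps_inverse_unique[symmetric])
  let ?g = "\<lambda>d. fibre_gf (\<lambda>m::nat. d * m) :: 'a fps"
  have fin: "finite_fibres (\<lambda>m::nat. d * m)" if "0 < d" for d
    using that by (rule finite_fibres_multiples)
  have degree: "standard_degree = (\<lambda>(a, y). 1 * a + (\<lambda>(i, z). 2 * i + (\<lambda>(j, c). 3 * j + 1 * c) z) y)"
    by (auto simp: standard_degree_def)
  have factors: "fibre_gf standard_degree = ?g 1 * (?g 2 * (?g 3 * ?g 1))"
    unfolding degree by (simp only: fibre_gf_add finite_fibres_add fin zero_less_one zero_less_numeral)
  have regroup: "(1 - X)^2 * (1 - X^2) * (1 - X^3) * (g1 * (g2 * (g3 * g1))) =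
      (g1 * (1 - X ^ 1)) * (g1 * (1 - X ^ 1)) * (g2 * (1 - X ^ 2)) * (g3 * (1 - X ^ 3))"
    for g1 g2 g3 X :: "'a fps"
    by algebra
  show "(1 - fps_X)^2 * (1 - fps_X^2) * (1 - fps_X^3) * fibre_gf standard_degree = (1 :: 'a fps)"
    unfolding factors regroup by (simp only: fibre_gf_multiples zero_less_numeral zero_less_one mult_1)
qed

theorem lemma7p4:
  fixes p :: "'k::alg_closed_field"
  assumes "p \<noteq> 0"
  shows "hilbert_series (nc_ideal {r3 p, r4 p}) =
         inverse ((1 - fps_X)^2 * (1 - fps_X^2) * (1 - fps_X^3) :: rat fps)"
proof -
  interpret nc_normal_form "nc_ideal {r3 p, r4 p}" "nf p" "\<lambda>w. \<not> reducible w"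
    by unfold_locales
      (use assms in \<open>simp_all add: mon_minus_nf_in_ideal nf_irreducible nf_support nf_annihilates_ideal\<close>)
  have "quot_dim (nc_ideal {r3 p, r4 p}) n = fibre_card standard_degree n" for n
    by (simp add: quot_dim_eq_card_normal card_irreducible_words)
  then have "hilbert_series (nc_ideal {r3 p, r4 p}) = fibre_gf standard_degree"
    by (simp add: hilbert_series_def fibre_gf_def)
  also have "\<dots> = inverse ((1 - fps_X)^2 * (1 - fps_X^2) * (1 - fps_X^3) :: rat fps)"
    by (rule fibre_gf_standard_degree)
  finally show ?thesis .
qed

end
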